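(* Let $n\geq 3$, $a>1$, $p,q\in\mathbb{R}$, and let $f_t(x)$, $x\in[1,a]$, solve $$\dot f=u''(x)\left(\frac{f''}{1+f'^2}+(n-1)\frac{xf'-f}{x^2+f^2}\right),\qquad f_t(1)=q,\ f_t(a)=p,$$ where $f_0$ satisfies the supercritical phase assumption $(n-1)\arctan\left(\frac{f_0}{x}\right)+\arctan(f_0')>(n-2)\frac{\pi}{2}$. Then $f_t(x)>0$ for all $t\geq 0$ for which the flow is defined.
   Context: This is the line bundle mean curvature flow on the blowup of $\mathbb{P}^n$ at a point under Calabi symmetry, written in the Legendre coordinate $x\in[1,a]$: $u''$ is the smooth function of $x$ coming from the Calabi-symmetric K\"ahler form $\omega=i\partial\bar\partial u$ in $a[H]-[E]$ (positive on $(1,a)$, vanishing at the endpoints), and $f$ encodes a Calabi-symmetric form $\alpha_t$ in $p[H]-q[E]$ whose eigenvalues relative to $\omega$ are $f/x$ (multiplicity $n-1$) and $f'$, so its angle is $\Theta=(n-1)\arctan(f/x)+\arctan(f')$. The supercritical phase condition $\Theta>(n-2)\frac\pi2$ is preserved along the flow. *)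

theory Defs
  imports "HOL-Analysis.Analysis"
begin

text \<open>Lagrangian angle of the Calabi-symmetric form: eigenvalues f/x (multiplicity n-1) and f'.\<close>
definition phase :: "nat \<Rightarrow> real \<Rightarrow> real \<Rightarrow> real \<Rightarrow> real" where
  "phase n x fx dfx = (real n - 1) * arctan (fx / x) + arctan dfx"

definition flow_rhs :: "nat \<Rightarrow> real \<Rightarrow> real \<Rightarrow> real \<Rightarrow> real \<Rightarrow> real \<Rightarrow> real" where
  "flow_rhs n upp x fx dfx ddfx =
     upp * (ddfx / (1 + dfx ^ 2) + (real n - 1) * (x * dfx - fx) / (x ^ 2 + fx ^ 2))"

end

theory Submission
  imports Defs
begin

text \<open>
  Initially f > 0: since arctan f' < \<pi>/2, the phase condition forces
  (n-1) arctan(f/x) > (n-3)\<pi>/2 \<ge> 0. Positivity then propagates by a minimum principle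
  with the barrier c(t) = \<delta> e^{-Kt}, where 0 < \<delta> < min f_0 and K = M(n-1) + 1 with
  M = max u''. At the first time the barrier is touched, the boundary values q, p > \<delta>
  place the spatial minimum of f in the interior, where f' = 0 and f'' \<ge> 0. There the
  flow gives f_t \<ge> -u''(n-1) f/(x^2+f^2) \<ge> -M(n-1) c > -Kc = c_t, contradicting the
  fact that f - c has just decreased to 0.
\<close>

lemma supercritical_phase_imp_pos:
  assumes "n \<ge> 3" "x > 0" and super: "phase n x y z > (real n - 2) * (pi / 2)"
  shows "y > 0"
proof -
  have "arctan z < pi / 2" by (rule arctan_ubound)
  with super have "(real n - 1) * arctan (y / x) > (real n - 3) * (pi / 2)"
    unfolding phase_def by (simp add: algebra_simps)
  moreover have "(real n - 3) * (pi / 2) \<ge> 0" using \<open>n \<ge> 3\<close> by simp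
  ultimately have "(real n - 1) * arctan (y / x) > 0" by linarith
  with \<open>n \<ge> 3\<close> have "arctan (y / x) > 0" by (simp add: zero_less_mult_iff)
  then have "y / x > 0" by simp
  with \<open>x > 0\<close> show ?thesis by (simp add: zero_less_divide_iff)
qed

lemma flow_rhs_at_critical_point_ge:
  assumes "x \<ge> 1" "n \<ge> 1" "0 \<le> U" "U \<le> M" "0 \<le> d2" "F \<le> c" "0 \<le> c"
  shows "flow_rhs n U x F 0 d2 \<ge> - (M * (real n - 1) * c)"
proof -
  have "F / (x\<^sup>2 + F\<^sup>2) \<le> c"
  proof (cases "F \<le> 0")
    case False
    have "1 \<le> x\<^sup>2" using \<open>x \<ge> 1\<close> by simp
    then have "x\<^sup>2 + F\<^sup>2 \<ge> 1" using zero_le_power2[of F] by linarith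
    then have "F / (x\<^sup>2 + F\<^sup>2) \<le> F" using False by (simp add: divide_le_eq)
    with \<open>F \<le> c\<close> show ?thesis by linarith
  next
    case True
    then have "F / (x\<^sup>2 + F\<^sup>2) \<le> 0" by (intro divide_nonpos_nonneg) auto
    with \<open>0 \<le> c\<close> show ?thesis by linarith
  qed
  then have "(real n - 1) * (F / (x\<^sup>2 + F\<^sup>2)) \<le> (real n - 1) * c"
    using \<open>n \<ge> 1\<close> by (intro mult_left_mono) auto
  then have "(real n - 1) * (x * 0 - F) / (x\<^sup>2 + F\<^sup>2) \<ge> - ((real n - 1) * c)"
    by simp
  then have "flow_rhs n U x F 0 d2 \<ge> U * (- ((real n - 1) * c))"
    unfolding flow_rhs_def using \<open>0 \<le> U\<close> \<open>0 \<le> d2\<close> by (intro mult_left_mono) auto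
  moreover have "U * ((real n - 1) * c) \<le> M * ((real n - 1) * c)"
    using assms by (intro mult_right_mono) auto
  ultimately show ?thesis by (simp add: algebra_simps)
qed

lemma interior_min_derivs:
  fixes f f' :: "real \<Rightarrow> real"
  assumes x0: "x0 \<in> {b<..<a}" and min: "\<And>y. y \<in> {b..a} \<Longrightarrow> f x0 \<le> f y"
    and f': "\<And>y. y \<in> {b..a} \<Longrightarrow> (f has_real_derivative f' y) (at y within {b..a})"
    and f'': "(f' has_real_derivative f'') (at x0 within {b..a})"
  shows "f' x0 = 0" and "0 \<le> f''"
proof -
  have deriv_at: "(f has_real_derivative f' y) (at y)" if "y \<in> {b<..<a}" for y
    using f'[of y] that at_within_Icc_at[of b y a] by auto
  show f'0: "f' x0 = 0"
  proof (rule DERIV_local_min[OF deriv_at[OF x0]])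
    show "0 < min (x0 - b) (a - x0)" using x0 by simp
    show "\<forall>y. \<bar>x0 - y\<bar> < min (x0 - b) (a - x0) \<longrightarrow> f x0 \<le> f y"
      using min by (auto simp: abs_if split: if_splits)
  qed
  show "0 \<le> f''"
  proof (rule ccontr)
    assume "\<not> 0 \<le> f''"
    moreover have "(f' has_real_derivative f'') (at x0)"
      using f'' x0 at_within_Icc_at[of b x0 a] by auto
    ultimately obtain d where "d > 0" and "\<forall>h>0. h < d \<longrightarrow> f' (x0 + h) < f' x0"
      using DERIV_neg_dec_right[of f' f'' x0] by force
    with f'0 have dec: "\<And>h. 0 < h \<Longrightarrow> h < d \<Longrightarrow> f' (x0 + h) < 0" by simp
    define h where "h = min d (a - x0) / 2"
    have h: "0 < h" "h < d" "x0 + h < a"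
      using \<open>d > 0\<close> x0 by (auto simp: h_def min_def field_simps)
    have "\<forall>y. x0 \<le> y \<and> y \<le> x0 + h \<longrightarrow> (f has_real_derivative f' y) (at y)"
      using h x0 deriv_at by simp
    then obtain z where z: "x0 < z" "z < x0 + h" "f (x0 + h) - f x0 = h * f' z"
      using MVT2[of x0 "x0 + h" f f'] \<open>0 < h\<close> by auto
    have "f' z < 0" using dec[of "z - x0"] z h by auto
    then have "h * f' z < 0" by (rule mult_pos_neg[OF \<open>0 < h\<close>])
    with z(3) have "f (x0 + h) < f x0" by linarith
    with min[of "x0 + h"] h x0 show False by auto
  qed
qed

lemma DERIV_nonpos_if_left_values_greater:
  fixes h :: "real \<Rightarrow> real"
  assumes "(h has_real_derivative D) (at t1)" "t0 < t1"
    and greater: "\<And>t. t \<in> {t0<..<t1} \<Longrightarrow> h t1 < h t"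
  shows "D \<le> 0"
proof (rule ccontr)
  assume "\<not> D \<le> 0"
  then obtain d where "d > 0" and inc: "\<And>s. 0 < s \<Longrightarrow> s < d \<Longrightarrow> h (t1 - s) < h t1"
    using DERIV_pos_inc_left[OF assms(1)] by force
  define s where "s = min d (t1 - t0) / 2"
  have "0 < s" "s < d" "t1 - s \<in> {t0<..<t1}"
    using \<open>d > 0\<close> \<open>t0 < t1\<close> by (auto simp: s_def min_def field_simps)
  with inc greater show False by fastforce
qed

lemma first_time_nonpos:
  fixes g :: "real \<Rightarrow> 'a::t2_space \<Rightarrow> real"
  assumes cont: "continuous_on ({t0..s} \<times> S) (\<lambda>(t, x). g t x)" and "compact S"
    and "x \<in> S" "g s x \<le> 0" "t0 \<le> s"
  obtains t1 where "t1 \<in> {t0..s}" "\<exists>x\<in>S. g t1 x \<le> 0"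
    "\<And>t x. t \<in> {t0..<t1} \<Longrightarrow> x \<in> S \<Longrightarrow> 0 < g t x"
proof -
  have K: "compact ({t0..s} \<times> S)" using \<open>compact S\<close> by (simp add: compact_Times)
  define Z where "Z = {z \<in> {t0..s} \<times> S. (\<lambda>(t, x). g t x) z \<le> 0}"
  have "closed Z" unfolding Z_def
    by (rule continuous_on_closed_Collect_le[OF cont continuous_on_const compact_imp_closed[OF K]])
  then have "compact ({t0..s} \<times> S \<inter> Z)" using K by (rule compact_Int_closed[rotated])
  moreover have "{t0..s} \<times> S \<inter> Z = Z" unfolding Z_def by blast
  ultimately have "compact Z" by simp
  moreover have "Z \<noteq> {}" using assms by (auto simp: Z_def)
  ultimately have "\<exists>z1\<in>Z. \<forall>z\<in>Z. fst z1 \<le> fst z"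
    by (intro continuous_attains_inf continuous_intros)
  then obtain z1 where z1: "z1 \<in> Z" and first: "\<And>z. z \<in> Z \<Longrightarrow> fst z1 \<le> fst z"
    by blast
  show thesis
  proof
    show "fst z1 \<in> {t0..s}" "\<exists>x\<in>S. g (fst z1) x \<le> 0" using z1 by (auto simp: Z_def)
    show "0 < g t y" if "t \<in> {t0..<fst z1}" "y \<in> S" for t y
    proof (rule ccontr)
      assume "\<not> 0 < g t y"
      then have "(t, y) \<in> Z" using that \<open>fst z1 \<in> {t0..s}\<close> by (auto simp: Z_def)
      with first[of "(t, y)"] that show False by simp
    qed
  qed
qed

lemma compact_pos_uniform_lower_bound:
  fixes g :: "'a::topological_space \<Rightarrow> real"
  assumes "compact S" "continuous_on S g" "\<And>x. x \<in> S \<Longrightarrow> 0 < g x"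
  obtains \<delta> where "0 < \<delta>" "\<And>x. x \<in> S \<Longrightarrow> \<delta> < g x"
proof (cases "S = {}")
  case False
  then obtain xm where "xm \<in> S" and xm_min: "\<And>y. y \<in> S \<Longrightarrow> g xm \<le> g y"
    using continuous_attains_inf[OF assms(1) _ assms(2)] by auto
  show thesis
  proof
    show "0 < g xm / 2" using assms(3)[OF \<open>xm \<in> S\<close>] by simp
    show "g xm / 2 < g x" if "x \<in> S" for x
      using xm_min[OF that] assms(3)[OF \<open>xm \<in> S\<close>] by simp
  qed
next
  case True
  show thesis by (rule that[of 1]) (use True in auto)
qed

lemma barrier_stays_below_solution:
  fixes f ft fx fxx :: "real \<Rightarrow> real \<Rightarrow> real" and c c' :: "real \<Rightarrow> real"
  assumes "b < a"
    and dx: "\<And>t x. t \<in> {0..<T} \<Longrightarrow> x \<in> {b..a} \<Longrightarrow>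
               ((\<lambda>y. f t y) has_real_derivative fx t x) (at x within {b..a})"
    and dxx: "\<And>t x. t \<in> {0..<T} \<Longrightarrow> x \<in> {b..a} \<Longrightarrow>
               ((\<lambda>y. fx t y) has_real_derivative fxx t x) (at x within {b..a})"
    and dt: "\<And>t x. t \<in> {0..<T} \<Longrightarrow> x \<in> {b..a} \<Longrightarrow>
               ((\<lambda>s. f s x) has_real_derivative ft t x) (at t within {0..<T})"
    and cont: "continuous_on ({0..<T} \<times> {b..a}) (\<lambda>(t, x). f t x)"
    and dc: "\<And>t. (c has_real_derivative c' t) (at t)"
    and init: "\<And>x. x \<in> {b..a} \<Longrightarrow> c 0 < f 0 x"
    and boundary: "\<And>t. t \<in> {0..<T} \<Longrightarrow> c t < f t b \<and> c t < f t a"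
    and touch: "\<And>t x. t \<in> {0<..<T} \<Longrightarrow> x \<in> {b<..<a} \<Longrightarrow> fx t x = 0 \<Longrightarrow>
               0 \<le> fxx t x \<Longrightarrow> f t x \<le> c t \<Longrightarrow> c' t < ft t x"
  shows "\<forall>t \<in> {0..<T}. \<forall>x \<in> {b..a}. c t < f t x"
proof (rule ccontr)
  assume "\<not> ?thesis"
  then obtain s x where s: "s \<in> {0..<T}" and x: "x \<in> {b..a}" and "f s x - c s \<le> 0"
    by (auto simp: not_less)
  have "continuous_on ({0..s} \<times> {b..a}) (\<lambda>(t, x). f t x)"
    by (rule continuous_on_subset[OF cont]) (use s in auto)
  moreover have "continuous_on ({0..s} \<times> {b..a}) (\<lambda>z. c (fst z))"
    using DERIV_continuous_on[OF dc] continuous_on_fst[OF continuous_on_id]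
    by (rule continuous_on_compose2) auto
  ultimately have "continuous_on ({0..s} \<times> {b..a}) (\<lambda>(t, x). f t x - c t)"
    using continuous_on_diff by (simp add: case_prod_beta)
  then obtain t1 where t1: "t1 \<in> {0..s}" and "\<exists>x\<in>{b..a}. f t1 x - c t1 \<le> 0"
    and before: "\<And>t x. t \<in> {0..<t1} \<Longrightarrow> x \<in> {b..a} \<Longrightarrow> 0 < f t x - c t"
    by (rule first_time_nonpos[where g = "\<lambda>t x. f t x - c t", OF _ compact_Icc x])
      (use s \<open>f s x - c s \<le> 0\<close> in auto)
  have t1T: "t1 \<in> {0..<T}" using t1 s by auto
  obtain x0 where x0: "x0 \<in> {b..a}" and min: "\<And>y. y \<in> {b..a} \<Longrightarrow> f t1 x0 \<le> f t1 y"
    using continuous_attains_inf[OF compact_Icc _ DERIV_continuous_on[OF dx[OF t1T]]] \<open>b < a\<close>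
    by auto
  from \<open>\<exists>x\<in>{b..a}. f t1 x - c t1 \<le> 0\<close> obtain x1 where "x1 \<in> {b..a}" "f t1 x1 \<le> c t1"
    by auto
  with min have touched: "f t1 x0 \<le> c t1" by (meson order_trans)
  have "x0 \<noteq> b" "x0 \<noteq> a" using touched boundary[OF t1T] by auto
  with x0 have x0_int: "x0 \<in> {b<..<a}" by auto
  have "t1 \<noteq> 0" using touched init[OF x0] by auto
  with t1T have t1_int: "t1 \<in> {0<..<T}" by auto
  have "fx t1 x0 = 0" "0 \<le> fxx t1 x0"
    using interior_min_derivs[OF x0_int min dx[OF t1T] dxx[OF t1T x0]] by auto
  with touch[OF t1_int x0_int _ _ touched] have faster: "c' t1 < ft t1 x0" by simp
  have "at t1 within {0..<T} = at t1"
    using t1_int by (intro at_within_interior) auto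
  with dt[OF t1T x0] have "((\<lambda>s. f s x0) has_real_derivative ft t1 x0) (at t1)" by simp
  then have "((\<lambda>s. f s x0 - c s) has_real_derivative ft t1 x0 - c' t1) (at t1)"
    by (intro DERIV_diff dc)
  moreover have "0 < t1" using t1_int by simp
  moreover have "f t1 x0 - c t1 < f t x0 - c t" if "t \<in> {0<..<t1}" for t
    using before[of t x0] that x0 touched by auto
  ultimately have "ft t1 x0 - c' t1 \<le> 0"
    by (rule DERIV_nonpos_if_left_values_greater)
  with faster show False by simp
qed

theorem lemma4p3:
  fixes n :: nat and a p q T :: real
    and upp :: "real \<Rightarrow> real"
    and f ft fx fxx :: "real \<Rightarrow> real \<Rightarrow> real"
  assumes n3: "n \<ge> 3" and a1: "a > 1" and T0: "T > 0"
    and upp_cont: "continuous_on {1..a} upp"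
    and upp_pos: "\<And>x. x \<in> {1<..<a} \<Longrightarrow> upp x > 0"
    and upp_1: "upp 1 = 0" and upp_a: "upp a = 0"
    and dx: "\<And>t x. t \<in> {0..<T} \<Longrightarrow> x \<in> {1..a} \<Longrightarrow>
               ((\<lambda>y. f t y) has_real_derivative fx t x) (at x within {1..a})"
    and dxx: "\<And>t x. t \<in> {0..<T} \<Longrightarrow> x \<in> {1..a} \<Longrightarrow>
               ((\<lambda>y. fx t y) has_real_derivative fxx t x) (at x within {1..a})"
    and dt: "\<And>t x. t \<in> {0..<T} \<Longrightarrow> x \<in> {1..a} \<Longrightarrow>
               ((\<lambda>s. f s x) has_real_derivative ft t x) (at t within {0..<T})"
    and cont: "continuous_on ({0..<T} \<times> {1..a}) (\<lambda>(t, x). f t x)"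
              "continuous_on ({0..<T} \<times> {1..a}) (\<lambda>(t, x). fx t x)"
              "continuous_on ({0..<T} \<times> {1..a}) (\<lambda>(t, x). fxx t x)"
              "continuous_on ({0..<T} \<times> {1..a}) (\<lambda>(t, x). ft t x)"
    and pde: "\<And>t x. t \<in> {0..<T} \<Longrightarrow> x \<in> {1..a} \<Longrightarrow>
               ft t x = flow_rhs n (upp x) x (f t x) (fx t x) (fxx t x)"
    and bc1: "\<And>t. t \<in> {0..<T} \<Longrightarrow> f t 1 = q"
    and bca: "\<And>t. t \<in> {0..<T} \<Longrightarrow> f t a = p"
    and super0: "\<And>x. x \<in> {1..a} \<Longrightarrow> phase n x (f 0 x) (fx 0 x) > (real n - 2) * (pi / 2)"
  shows "\<forall>t \<in> {0..<T}. \<forall>x \<in> {1..a}. f t x > 0"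
proof -
  have "0 \<in> {0..<T}" using T0 by simp
  have "0 < f 0 x" if "x \<in> {1..a}" for x
    using supercritical_phase_imp_pos[OF n3 _ super0[OF that]] that by simp
  then obtain \<delta> where "0 < \<delta>" and init: "\<And>x. x \<in> {1..a} \<Longrightarrow> \<delta> < f 0 x"
    using compact_pos_uniform_lower_bound[OF compact_Icc DERIV_continuous_on[OF dx]]
      \<open>0 \<in> {0..<T}\<close> by blast
  have "\<exists>xM\<in>{1..a}. \<forall>x\<in>{1..a}. upp x \<le> upp xM"
    using continuous_attains_sup[OF compact_Icc _ upp_cont] a1 by simp
  then obtain M where upp_le: "\<And>x. x \<in> {1..a} \<Longrightarrow> upp x \<le> M" by blast
  define K where "K = M * (real n - 1) + 1"
  define c where "c t = \<delta> * exp (- K * t)" for t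
  have c_pos: "0 < c t" for t using \<open>0 < \<delta>\<close> by (simp add: c_def)
  have "K \<ge> 1" using upp_le[of 1] upp_1 a1 n3 by (simp add: K_def)
  then have c_le: "c t \<le> \<delta>" if "t \<ge> 0" for t
    using that \<open>0 < \<delta>\<close> by (simp add: c_def mult_le_cancel_left1)
  have "\<forall>t \<in> {0..<T}. \<forall>x \<in> {1..a}. c t < f t x"
  proof (rule barrier_stays_below_solution[OF a1 dx dxx dt cont(1), of c "\<lambda>t. - K * c t"])
    show "(c has_real_derivative - K * c t) (at t)" for t
      unfolding c_def by (auto intro!: derivative_eq_intros)
    show "c t < f t 1 \<and> c t < f t a" if "t \<in> {0..<T}" for t
      using c_le[of t] init[of 1] init[of a] a1 that bc1 bca \<open>0 \<in> {0..<T}\<close> by auto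
    show "- K * c t < ft t x" if "t \<in> {0<..<T}" "x \<in> {1<..<a}" "fx t x = 0"
      "0 \<le> fxx t x" "f t x \<le> c t" for t x
    proof -
      have "- (M * (real n - 1) * c t) \<le> ft t x"
        using pde[of t x] that upp_le[of x] upp_pos[of x] n3 c_pos[of t]
        by (auto intro!: flow_rhs_at_critical_point_ge)
      then show ?thesis using c_pos[of t] by (simp add: K_def algebra_simps)
    qed
  qed (use init c_def in auto)
  then show ?thesis using c_pos by (meson less_trans)
qed

end
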